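(* Let $(Y,u)$ and $(Y',u')$ be non-empty ultrametric spaces and let $f:Y\to Y'$ be immediate. If $(Y,u)$ is spherically complete, then $f$ is surjective and $(Y',u')$ is spherically complete. Moreover, for every $y\in Y$ and every ball $B'$ in $Y'$ containing $fy$, there is a ball $B$ in $Y$ containing $y$ such that $f(B)=B'$.
   Context: An ultrametric space $(Y,u)$ is a set $Y$ with a map $u$ from $Y\times Y$ onto a totally ordered set $\Gamma$ with last element $\infty$ such that for all $x,y,z\in Y$: $u(y,z)=\infty$ iff $y=z$; $u(y,z)\ge\min\{u(y,x),u(x,z)\}$; $u(y,z)=u(z,y)$. For $y\in Y$ and $\alpha\in\Gamma$, $B_\alpha(y)=\{z\in Y: u(y,z)\ge\alpha\}$ (closed ball), and $B(x,y):=B_{u(x,y)}(x)$. A ball is a union of a non-empty collection of closed balls which contain a common element. A nest of balls is a set of balls totally ordered by inclusion; $(Y,u)$ is spherically complete if every nest of balls has non-empty intersection. We write $fy$ for $f(y)$. An element $z'\in Y'$ is an attractor for $f$ if for every $y\in Y$ with $z'\ne fy$ there is $z\in Y$ with $u'(fz,z')>u'(fy,z')$ and $f(B(y,z))\subseteq B(fy,z')$. The map $f$ is immediate if every $z'\in Y'$ is an attractor for $f$. *)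

theory Defs
  imports Main
begin

text \<open>An ultrametric space is a carrier set Y with a map u into a linear order whose
  value set Gamma = u(Y x Y) has last element infinity; we take infinity to be top.\<close>

definition Gamma :: "'a set \<Rightarrow> ('a \<Rightarrow> 'a \<Rightarrow> 'g) \<Rightarrow> 'g set" where
  "Gamma Y u = {u x y | x y. x \<in> Y \<and> y \<in> Y}"

definition ultrametric :: "'a set \<Rightarrow> ('a \<Rightarrow> 'a \<Rightarrow> 'g::{linorder,order_top}) \<Rightarrow> bool" where
  "ultrametric Y u \<longleftrightarrow>
     (\<forall>y\<in>Y. \<forall>z\<in>Y. u y z = top \<longleftrightarrow> y = z) \<and>
     (\<forall>x\<in>Y. \<forall>y\<in>Y. \<forall>z\<in>Y. u y z \<ge> min (u y x) (u x z)) \<and>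
     (\<forall>y\<in>Y. \<forall>z\<in>Y. u y z = u z y)"

definition closed_ball :: "'a set \<Rightarrow> ('a \<Rightarrow> 'a \<Rightarrow> 'g::linorder) \<Rightarrow> 'g \<Rightarrow> 'a \<Rightarrow> 'a set" where
  "closed_ball Y u \<alpha> y = {z \<in> Y. u y z \<ge> \<alpha>}"

definition is_closed_ball :: "'a set \<Rightarrow> ('a \<Rightarrow> 'a \<Rightarrow> 'g::linorder) \<Rightarrow> 'a set \<Rightarrow> bool" where
  "is_closed_ball Y u B \<longleftrightarrow> (\<exists>y\<in>Y. \<exists>\<alpha>\<in>Gamma Y u. B = closed_ball Y u \<alpha> y)"

definition is_ball :: "'a set \<Rightarrow> ('a \<Rightarrow> 'a \<Rightarrow> 'g::linorder) \<Rightarrow> 'a set \<Rightarrow> bool" where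
  "is_ball Y u B \<longleftrightarrow> (\<exists>C. C \<noteq> {} \<and> (\<forall>b\<in>C. is_closed_ball Y u b) \<and>
                         (\<exists>x. \<forall>b\<in>C. x \<in> b) \<and> B = \<Union>C)"

definition nest_of_balls :: "'a set \<Rightarrow> ('a \<Rightarrow> 'a \<Rightarrow> 'g::linorder) \<Rightarrow> 'a set set \<Rightarrow> bool" where
  "nest_of_balls Y u N \<longleftrightarrow> (\<forall>B\<in>N. is_ball Y u B) \<and> (\<forall>A\<in>N. \<forall>B\<in>N. A \<subseteq> B \<or> B \<subseteq> A)"

definition spherically_complete :: "'a set \<Rightarrow> ('a \<Rightarrow> 'a \<Rightarrow> 'g::linorder) \<Rightarrow> bool" where
  "spherically_complete Y u \<longleftrightarrow> (\<forall>N. N \<noteq> {} \<and> nest_of_balls Y u N \<longrightarrow> \<Inter>N \<noteq> {})"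

definition ball2 :: "'a set \<Rightarrow> ('a \<Rightarrow> 'a \<Rightarrow> 'g::linorder) \<Rightarrow> 'a \<Rightarrow> 'a \<Rightarrow> 'a set" where
  "ball2 Y u x y = closed_ball Y u (u x y) x"

definition attractor ::
  "'a set \<Rightarrow> ('a \<Rightarrow> 'a \<Rightarrow> 'g::linorder) \<Rightarrow> 'b set \<Rightarrow> ('b \<Rightarrow> 'b \<Rightarrow> 'h::linorder)
     \<Rightarrow> ('a \<Rightarrow> 'b) \<Rightarrow> 'b \<Rightarrow> bool" where
  "attractor Y u Y' u' f z' \<longleftrightarrow>
     (\<forall>y\<in>Y. z' \<noteq> f y \<longrightarrow>
        (\<exists>z\<in>Y. u' (f z) z' > u' (f y) z' \<and> f ` ball2 Y u y z \<subseteq> ball2 Y' u' (f y) z'))"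

definition immediate ::
  "'a set \<Rightarrow> ('a \<Rightarrow> 'a \<Rightarrow> 'g::linorder) \<Rightarrow> 'b set \<Rightarrow> ('b \<Rightarrow> 'b \<Rightarrow> 'h::linorder)
     \<Rightarrow> ('a \<Rightarrow> 'b) \<Rightarrow> bool" where
  "immediate Y u Y' u' f \<longleftrightarrow> f ` Y \<subseteq> Y' \<and> (\<forall>z'\<in>Y'. attractor Y u Y' u' f z')"

end

theory Submission
  imports Defs
begin

text \<open>Fix z' in Y' and a pair (y, w) witnessing that z' is an attractor. By Zorn's lemma there
  is a maximal chain of such witnesses along which the balls B(y, w) shrink; spherical completeness
  yields a point of their intersection whose image is closer to z' than the image of every centre
  of the chain, and unless that point is mapped to z' the attractor property would extend the
  chain. So B(y, w) contains a preimage of z'. This gives surjectivity, and it shows that the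
  largest ball around y mapped into a ball B' containing f y is mapped onto B'. Spherical
  completeness of Y' follows by lifting a nest of balls of Y', again via Zorn's lemma, to a
  nest of such balls in Y.\<close>

lemma exists_maximal_related_set:
  assumes "Q p0" and refl: "\<And>p. R p p"
  obtains M where "p0 \<in> M" "\<forall>p\<in>M. Q p" "\<forall>p\<in>M. \<forall>q\<in>M. R p q"
    "\<And>p. Q p \<Longrightarrow> \<forall>q\<in>M. R p q \<and> R q p \<Longrightarrow> p \<in> M"
proof -
  define A where "A = {N. p0 \<in> N \<and> (\<forall>p\<in>N. Q p) \<and> (\<forall>p\<in>N. \<forall>q\<in>N. R p q)}"
  have "\<exists>U\<in>A. \<forall>X\<in>C. X \<subseteq> U" if C: "C \<in> chains A" for C
  proof (cases "C = {}")
    case True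
    then show ?thesis using assms by (auto simp: A_def intro!: bexI[of _ "{p0}"])
  next
    case False
    have CA: "C \<subseteq> A" and ch: "\<And>X Z. X \<in> C \<Longrightarrow> Z \<in> C \<Longrightarrow> X \<subseteq> Z \<or> Z \<subseteq> X"
      using C by (auto simp: chains_def chain_subset_def)
    have "R p q" if "p \<in> \<Union>C" "q \<in> \<Union>C" for p q
    proof -
      obtain X Z where XZ: "X \<in> C" "Z \<in> C" "p \<in> X" "q \<in> Z" "X \<subseteq> Z \<or> Z \<subseteq> X"
        using \<open>p \<in> \<Union>C\<close> \<open>q \<in> \<Union>C\<close> ch by blast
      then show ?thesis using CA unfolding A_def by blast
    qed
    moreover have "p0 \<in> \<Union>C" "\<forall>p\<in>\<Union>C. Q p" using False CA unfolding A_def by blast+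
    ultimately have "\<Union>C \<in> A" unfolding A_def by blast
    then show ?thesis by auto
  qed
  from Zorn_Lemma2[OF ballI[OF this]]
  obtain M where M: "M \<in> A" "\<And>X. X \<in> A \<Longrightarrow> M \<subseteq> X \<Longrightarrow> X = M" by blast
  have "p \<in> M" if "Q p" "\<forall>q\<in>M. R p q \<and> R q p" for p
  proof -
    have "insert p M \<in> A" using M(1) that refl unfolding A_def by blast
    then show ?thesis using M(2) by blast
  qed
  then show ?thesis using M(1) that unfolding A_def by blast
qed

locale ultrametric_space =
  fixes Y :: "'a set" and u :: "'a \<Rightarrow> 'a \<Rightarrow> 'g::{linorder,order_top}"
  assumes ultrametric: "ultrametric Y u"
begin

lemma dist_self: "y \<in> Y \<Longrightarrow> u y y = top"
  using ultrametric by (auto simp: ultrametric_def)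

lemma dist_commute: "a \<in> Y \<Longrightarrow> b \<in> Y \<Longrightarrow> u a b = u b a"
  using ultrametric by (auto simp: ultrametric_def)

lemma dist_ge_trans:
  assumes "a \<in> Y" "b \<in> Y" "c \<in> Y" "\<beta> \<le> u a c" "\<beta> \<le> u c b"
  shows "\<beta> \<le> u a b"
proof -
  have "min (u a c) (u c b) \<le> u a b"
    using ultrametric assms(1-3) by (auto simp: ultrametric_def)
  then show ?thesis using assms(4,5) by (simp add: min_def split: if_splits)
qed

lemma closed_ball_top: "y \<in> Y \<Longrightarrow> closed_ball Y u top y = {y}"
  using ultrametric by (auto simp: closed_ball_def ultrametric_def top_unique)

lemma dist_in_Gamma: "a \<in> Y \<Longrightarrow> b \<in> Y \<Longrightarrow> u a b \<in> Gamma Y u"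
  unfolding Gamma_def by blast

lemma top_in_Gamma: "y \<in> Y \<Longrightarrow> top \<in> Gamma Y u"
  using dist_in_Gamma dist_self by metis

lemma centre_in_closed_ball: "y \<in> Y \<Longrightarrow> y \<in> closed_ball Y u \<alpha> y"
  by (simp add: closed_ball_def dist_self)

lemma closed_ball_subset_closed_ball:
  assumes "p \<in> closed_ball Y u \<beta>1 c1" "p \<in> closed_ball Y u \<beta>2 c2" "c1 \<in> Y" "c2 \<in> Y" "\<beta>1 \<le> \<beta>2"
  shows "closed_ball Y u \<beta>2 c2 \<subseteq> closed_ball Y u \<beta>1 c1"
proof
  fix v assume v: "v \<in> closed_ball Y u \<beta>2 c2"
  have pY: "p \<in> Y" and vY: "v \<in> Y" using assms(1) v by (auto simp: closed_ball_def)
  have "\<beta>2 \<le> u p v"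
    using dist_ge_trans[OF pY vY assms(4), of \<beta>2] assms(2) v dist_commute[OF pY assms(4)]
    by (auto simp: closed_ball_def)
  then have "\<beta>1 \<le> u c1 v"
    using dist_ge_trans[OF assms(3) vY pY, of \<beta>1] assms(1,5) by (auto simp: closed_ball_def)
  then show "v \<in> closed_ball Y u \<beta>1 c1" using vY by (auto simp: closed_ball_def)
qed

lemma closed_balls_nested:
  assumes "p \<in> closed_ball Y u \<beta>1 c1" "p \<in> closed_ball Y u \<beta>2 c2" "c1 \<in> Y" "c2 \<in> Y"
  shows "closed_ball Y u \<beta>2 c2 \<subseteq> closed_ball Y u \<beta>1 c1 \<or>
         closed_ball Y u \<beta>1 c1 \<subseteq> closed_ball Y u \<beta>2 c2"
  using closed_ball_subset_closed_ball[OF assms] closed_ball_subset_closed_ball[OF assms(2,1,4,3)]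
  by (cases "\<beta>1 \<le> \<beta>2") auto

lemma closed_ball_recentre:
  assumes "p \<in> closed_ball Y u \<alpha> c" "c \<in> Y"
  shows "closed_ball Y u \<alpha> p = closed_ball Y u \<alpha> c"
proof -
  have pY: "p \<in> Y" using assms by (auto simp: closed_ball_def)
  show ?thesis
    using closed_ball_subset_closed_ball[OF assms(1) centre_in_closed_ball[OF pY] assms(2) pY]
      closed_ball_subset_closed_ball[OF centre_in_closed_ball[OF pY] assms(1) pY assms(2)]
    by auto
qed

lemma ball2_subset_closed_ball:
  assumes "a \<in> closed_ball Y u \<beta> c" "b \<in> closed_ball Y u \<beta> c" "c \<in> Y"
  shows "ball2 Y u a b \<subseteq> closed_ball Y u \<beta> c"
proof
  fix v assume v: "v \<in> ball2 Y u a b"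
  have aY: "a \<in> Y" and bY: "b \<in> Y" and vY: "v \<in> Y"
    using assms v by (auto simp: closed_ball_def ball2_def)
  have "\<beta> \<le> u a b"
    using dist_ge_trans[OF aY bY assms(3)] assms dist_commute[OF aY assms(3)]
    by (auto simp: closed_ball_def)
  then have "\<beta> \<le> u a v" using v by (auto simp: ball2_def closed_ball_def)
  then have "\<beta> \<le> u c v"
    using dist_ge_trans[OF assms(3) vY aY] assms(1) by (auto simp: closed_ball_def)
  then show "v \<in> closed_ball Y u \<beta> c" using vY by (auto simp: closed_ball_def)
qed

lemma is_ball_subset: "is_ball Y u B \<Longrightarrow> B \<subseteq> Y"
  by (auto simp: is_ball_def is_closed_ball_def closed_ball_def)

lemma is_ball_nonempty: "is_ball Y u B \<Longrightarrow> B \<noteq> {}"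
  by (auto simp: is_ball_def)

lemma is_ball_closed_ball: "y \<in> Y \<Longrightarrow> \<alpha> \<in> Gamma Y u \<Longrightarrow> is_ball Y u (closed_ball Y u \<alpha> y)"
  unfolding is_ball_def is_closed_ball_def
  by (rule exI[of _ "{closed_ball Y u \<alpha> y}"]) (auto intro: centre_in_closed_ball)

text \<open>The closed balls making up a ball all contain a common point, so any two of them are
  nested and one of them contains both given points.\<close>
lemma ball2_subset_is_ball:
  assumes B: "is_ball Y u B" and ab: "a \<in> B" "b \<in> B"
  shows "ball2 Y u a b \<subseteq> B"
proof -
  obtain C x where C: "\<forall>b\<in>C. is_closed_ball Y u b" "\<forall>b\<in>C. x \<in> b" "B = \<Union>C"
    using B by (auto simp: is_ball_def)
  obtain D1 D2 where D: "D1 \<in> C" "D2 \<in> C" "a \<in> D1" "b \<in> D2" using ab C(3) by auto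
  obtain c1 \<beta>1 where 1: "c1 \<in> Y" "D1 = closed_ball Y u \<beta>1 c1"
    using C(1) D(1) by (auto simp: is_closed_ball_def)
  obtain c2 \<beta>2 where 2: "c2 \<in> Y" "D2 = closed_ball Y u \<beta>2 c2"
    using C(1) D(2) by (auto simp: is_closed_ball_def)
  have "D2 \<subseteq> D1 \<or> D1 \<subseteq> D2"
    using closed_balls_nested[of x \<beta>1 c1 \<beta>2 c2] C(2) D(1,2) 1 2 by auto
  then have "ball2 Y u a b \<subseteq> D1 \<or> ball2 Y u a b \<subseteq> D2"
    using ball2_subset_closed_ball[of a \<beta>1 c1 b] ball2_subset_closed_ball[of a \<beta>2 c2 b] D 1 2
    by auto
  then show ?thesis using D C(3) by auto
qed

definition lift_ball :: "('a \<Rightarrow> 'b) \<Rightarrow> 'a \<Rightarrow> 'b set \<Rightarrow> 'a set" where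
  "lift_ball f y B' =
     {v \<in> Y. \<exists>\<alpha>\<in>Gamma Y u. v \<in> closed_ball Y u \<alpha> y \<and> f ` closed_ball Y u \<alpha> y \<subseteq> B'}"

lemma lift_ball_subset: "lift_ball f y B' \<subseteq> Y"
  by (auto simp: lift_ball_def)

lemma image_lift_ball_subset: "f ` lift_ball f y B' \<subseteq> B'"
  by (auto simp: lift_ball_def)

lemma closed_ball_subset_lift_ball:
  "y \<in> Y \<Longrightarrow> \<alpha> \<in> Gamma Y u \<Longrightarrow> f ` closed_ball Y u \<alpha> y \<subseteq> B' \<Longrightarrow>
   closed_ball Y u \<alpha> y \<subseteq> lift_ball f y B'"
  by (auto simp: lift_ball_def closed_ball_def)

lemma centre_in_lift_ball: "y \<in> Y \<Longrightarrow> f y \<in> B' \<Longrightarrow> y \<in> lift_ball f y B'"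
  using closed_ball_subset_lift_ball[of y top f B'] top_in_Gamma closed_ball_top by simp

lemma is_ball_lift_ball:
  assumes "y \<in> Y" "f y \<in> B'"
  shows "is_ball Y u (lift_ball f y B')"
proof -
  define C where
    "C = {closed_ball Y u \<alpha> y | \<alpha>. \<alpha> \<in> Gamma Y u \<and> f ` closed_ball Y u \<alpha> y \<subseteq> B'}"
  have "closed_ball Y u top y \<in> C"
    using assms top_in_Gamma[OF assms(1)] closed_ball_top[OF assms(1)] unfolding C_def
    by (auto intro!: exI[of _ top])
  then have "C \<noteq> {}" by blast
  moreover have "\<forall>b\<in>C. is_closed_ball Y u b" using assms by (auto simp: C_def is_closed_ball_def)
  moreover have "\<forall>b\<in>C. y \<in> b" using assms by (auto simp: C_def centre_in_closed_ball)
  moreover have "lift_ball f y B' = \<Union>C" by (auto simp: C_def lift_ball_def closed_ball_def)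
  ultimately show ?thesis unfolding is_ball_def by blast
qed

lemma lift_ball_mono:
  assumes y: "y \<in> Y" and y1: "y1 \<in> lift_ball f y B''" and "B' \<subseteq> B''"
  shows "lift_ball f y1 B' \<subseteq> lift_ball f y B''"
proof
  fix v assume "v \<in> lift_ball f y1 B'"
  then obtain \<alpha> where a: "\<alpha> \<in> Gamma Y u" "v \<in> closed_ball Y u \<alpha> y1"
      "f ` closed_ball Y u \<alpha> y1 \<subseteq> B'"
    by (auto simp: lift_ball_def)
  obtain \<beta> where b: "\<beta> \<in> Gamma Y u" "y1 \<in> closed_ball Y u \<beta> y"
      "f ` closed_ball Y u \<beta> y \<subseteq> B''"
    using y1 by (auto simp: lift_ball_def)
  have y1Y: "y1 \<in> Y" using b by (auto simp: closed_ball_def)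
  show "v \<in> lift_ball f y B''"
  proof (cases "\<beta> \<le> \<alpha>")
    case True
    then have "closed_ball Y u \<alpha> y1 \<subseteq> closed_ball Y u \<beta> y"
      using closed_ball_subset_closed_ball[OF b(2) centre_in_closed_ball[OF y1Y] y y1Y] by auto
    then show ?thesis using a b closed_ball_subset_lift_ball[OF y b(1,3)] by auto
  next
    case False
    then have "closed_ball Y u \<beta> y \<subseteq> closed_ball Y u \<alpha> y1"
      using closed_ball_subset_closed_ball[OF centre_in_closed_ball[OF y1Y] b(2) y1Y y] by auto
    then have "closed_ball Y u \<alpha> y = closed_ball Y u \<alpha> y1"
      using closed_ball_recentre[OF _ y1Y] centre_in_closed_ball[OF y] by auto
    then show ?thesis
      using closed_ball_subset_lift_ball[OF y a(1), of f B''] a \<open>B' \<subseteq> B''\<close> by auto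
  qed
qed

end

locale immediate_map = dom: ultrametric_space Y u + cod: ultrametric_space Y' u'
  for Y :: "'a set" and u :: "'a \<Rightarrow> 'a \<Rightarrow> 'g::{linorder,order_top}"
    and Y' :: "'b set" and u' :: "'b \<Rightarrow> 'b \<Rightarrow> 'h::{linorder,order_top}" +
  fixes f :: "'a \<Rightarrow> 'b"
  assumes immediate: "immediate Y u Y' u' f"
    and spherically_complete: "spherically_complete Y u"
begin

lemma maps_into: "y \<in> Y \<Longrightarrow> f y \<in> Y'"
  using immediate by (auto simp: immediate_def)

definition pair_ball :: "'a \<times> 'a \<Rightarrow> 'a set" where
  "pair_ball p = ball2 Y u (fst p) (snd p)"

definition attracting_pair :: "'b \<Rightarrow> 'a \<times> 'a \<Rightarrow> bool" where
  "attracting_pair z' p \<longleftrightarrow> fst p \<in> Y \<and> snd p \<in> Y \<and> u' (f (fst p)) z' < u' (f (snd p)) z' \<and>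
     f ` pair_ball p \<subseteq> ball2 Y' u' (f (fst p)) z'"

definition compatible_pairs :: "'b \<Rightarrow> 'a \<times> 'a \<Rightarrow> 'a \<times> 'a \<Rightarrow> bool" where
  "compatible_pairs z' p q \<longleftrightarrow> (pair_ball p \<subseteq> pair_ball q \<or> pair_ball q \<subseteq> pair_ball p) \<and>
     (pair_ball p \<subset> pair_ball q \<longrightarrow> u' (f (fst q)) z' < u' (f (fst p)) z')"

lemma exists_attracting_pair:
  assumes "z' \<in> Y'" "y \<in> Y" "f y \<noteq> z'"
  obtains w where "attracting_pair z' (y, w)"
proof -
  have "attractor Y u Y' u' f z'" using immediate assms(1) by (auto simp: immediate_def)
  then obtain w where "w \<in> Y" "u' (f y) z' < u' (f w) z'"
      "f ` ball2 Y u y w \<subseteq> ball2 Y' u' (f y) z'"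
    using assms(2,3) unfolding attractor_def by metis
  then show ?thesis using that assms(2) by (auto simp: attracting_pair_def pair_ball_def)
qed

lemma attracting_pair_le:
  assumes z: "z' \<in> Y'" and p: "attracting_pair z' p" and v: "v \<in> pair_ball p"
  shows "u' (f (fst p)) z' \<le> u' (f v) z'"
proof -
  have yY: "fst p \<in> Y" and vY: "v \<in> Y"
    using p v by (auto simp: attracting_pair_def pair_ball_def ball2_def closed_ball_def)
  have "f v \<in> ball2 Y' u' (f (fst p)) z'" using p v by (auto simp: attracting_pair_def)
  then have "u' (f (fst p)) z' \<le> u' (f v) (f (fst p))"
    using cod.dist_commute[OF maps_into[OF vY] maps_into[OF yY]]
    by (simp add: ball2_def closed_ball_def)
  then show ?thesis
    using cod.dist_ge_trans[OF maps_into[OF vY] z maps_into[OF yY]] by simp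
qed

lemma attracting_pair_mem: "attracting_pair z' p \<Longrightarrow> fst p \<in> pair_ball p \<and> snd p \<in> pair_ball p"
  by (auto simp: attracting_pair_def pair_ball_def ball2_def closed_ball_def dom.dist_self)

lemma pair_balls_nested:
  "fst p \<in> Y \<Longrightarrow> fst q \<in> Y \<Longrightarrow> v \<in> pair_ball p \<Longrightarrow> v \<in> pair_ball q \<Longrightarrow>
   pair_ball p \<subseteq> pair_ball q \<or> pair_ball q \<subseteq> pair_ball p"
  unfolding pair_ball_def ball2_def using dom.closed_balls_nested by blast

lemma nest_of_pair_balls:
  assumes "\<forall>p\<in>M. attracting_pair z' p" "\<forall>p\<in>M. \<forall>q\<in>M. compatible_pairs z' p q"
  shows "nest_of_balls Y u (pair_ball ` M)"
  using assms dom.is_ball_closed_ball dom.dist_in_Gamma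
  by (auto simp: nest_of_balls_def compatible_pairs_def attracting_pair_def pair_ball_def ball2_def)

lemma chain_has_closer_point:
  assumes z: "z' \<in> Y'" and M: "\<forall>p\<in>M. attracting_pair z' p"
      "\<forall>p\<in>M. \<forall>q\<in>M. compatible_pairs z' p q"
    and x: "x \<in> \<Inter>(pair_ball ` M)"
  obtains a where "a \<in> \<Inter>(pair_ball ` M)" "\<forall>q\<in>M. u' (f (fst q)) z' < u' (f a) z'"
proof (cases "\<forall>q\<in>M. u' (f (fst q)) z' < u' (f x) z'")
  case True
  then show ?thesis using that x by blast
next
  case False
  have le: "\<forall>q\<in>M. u' (f (fst q)) z' \<le> u' (f x) z'" using attracting_pair_le[OF z] M(1) x by blast
  then obtain q where q: "q \<in> M" "u' (f (fst q)) z' = u' (f x) z'"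
    using False by (metis antisym_conv1)
  text \<open>No ball of the chain lies strictly inside the one of q, so the endpoint of q lies in
    all of them, and it is strictly closer to z' than x.\<close>
  have "snd q \<in> pair_ball q'" if "q' \<in> M" for q'
  proof (rule ccontr)
    assume "snd q \<notin> pair_ball q'"
    then have "pair_ball q' \<subset> pair_ball q"
      using M q(1) that attracting_pair_mem[of z' q] by (auto simp: compatible_pairs_def)
    then have "u' (f (fst q)) z' < u' (f (fst q')) z'"
      using M(2) q(1) that by (auto simp: compatible_pairs_def)
    then show False using le that q(2) by force
  qed
  moreover have "\<forall>q'\<in>M. u' (f (fst q')) z' < u' (f (snd q)) z'"
    using le q M(1) by (force simp: attracting_pair_def)
  ultimately show ?thesis using that by blast
qed

lemma compatible_with_closer_pair:
  assumes z: "z' \<in> Y'" and q: "attracting_pair z' q" and ab: "attracting_pair z' (a, b)"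
    and a: "a \<in> pair_ball q" and closer: "u' (f (fst q)) z' < u' (f a) z'"
  shows "compatible_pairs z' (a, b) q \<and> compatible_pairs z' q (a, b)"
proof -
  have nested: "pair_ball (a, b) \<subseteq> pair_ball q \<or> pair_ball q \<subseteq> pair_ball (a, b)"
    using pair_balls_nested[of "(a, b)" q a] q ab a attracting_pair_mem[OF ab]
    by (auto simp: attracting_pair_def)
  have "\<not> pair_ball q \<subset> pair_ball (a, b)"
  proof
    assume "pair_ball q \<subset> pair_ball (a, b)"
    then have "fst q \<in> pair_ball (a, b)" using attracting_pair_mem[OF q] by auto
    then have "u' (f a) z' \<le> u' (f (fst q)) z'" using attracting_pair_le[OF z ab] by simp
    then show False using closer by simp
  qed
  then show ?thesis using nested closer by (auto simp: compatible_pairs_def)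
qed

lemma attractor_mem_image_pair_ball:
  assumes z: "z' \<in> Y'" and p0: "attracting_pair z' p0"
  shows "z' \<in> f ` pair_ball p0"
proof (rule ccontr)
  assume miss: "z' \<notin> f ` pair_ball p0"
  have refl: "\<And>p. compatible_pairs z' p p" by (simp add: compatible_pairs_def)
  obtain M where M: "p0 \<in> M" "\<forall>p\<in>M. attracting_pair z' p" "\<forall>p\<in>M. \<forall>q\<in>M. compatible_pairs z' p q"
      "\<And>p. attracting_pair z' p \<Longrightarrow> \<forall>q\<in>M. compatible_pairs z' p q \<and> compatible_pairs z' q p
         \<Longrightarrow> p \<in> M"
    using exists_maximal_related_set[of "attracting_pair z'" p0 "compatible_pairs z'", OF p0 refl]
    by blast
  have "\<Inter>(pair_ball ` M) \<noteq> {}"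
    using spherically_complete nest_of_pair_balls[OF M(2,3)] M(1)
    unfolding spherically_complete_def by (metis empty_is_image equals0D)
  then obtain a where a: "a \<in> \<Inter>(pair_ball ` M)" "\<forall>q\<in>M. u' (f (fst q)) z' < u' (f a) z'"
    using chain_has_closer_point[OF z M(2,3)] by blast
  have "a \<in> pair_ball p0" using a(1) M(1) by blast
  then have "a \<in> Y" and "f a \<noteq> z'" using miss by (auto simp: pair_ball_def ball2_def closed_ball_def)
  then obtain b where ab: "attracting_pair z' (a, b)" using exists_attracting_pair[OF z] by blast
  have "compatible_pairs z' (a, b) q \<and> compatible_pairs z' q (a, b)" if "q \<in> M" for q
    using compatible_with_closer_pair[OF z _ ab, of q] M(2) a that by simp
  then have "(a, b) \<in> M" using M(4)[OF ab] by blast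
  then show False using a(2) by auto
qed

lemma exists_closed_ball_reaching:
  assumes y: "y \<in> Y" and z: "z' \<in> Y'"
  obtains \<alpha> where "\<alpha> \<in> Gamma Y u" "z' \<in> f ` closed_ball Y u \<alpha> y"
    "\<And>B'. is_ball Y' u' B' \<Longrightarrow> f y \<in> B' \<Longrightarrow> z' \<in> B' \<Longrightarrow> f ` closed_ball Y u \<alpha> y \<subseteq> B'"
proof (cases "f y = z'")
  case True
  then show ?thesis using that[of top] dom.top_in_Gamma[OF y] dom.closed_ball_top[OF y] by auto
next
  case False
  then obtain w where yw: "attracting_pair z' (y, w)" using exists_attracting_pair[OF z y] by blast
  have "u y w \<in> Gamma Y u" using yw dom.dist_in_Gamma[OF y] by (simp add: attracting_pair_def)
  moreover have "z' \<in> f ` closed_ball Y u (u y w) y"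
    using attractor_mem_image_pair_ball[OF z yw] by (simp add: pair_ball_def ball2_def)
  moreover have "f ` closed_ball Y u (u y w) y \<subseteq> B'"
    if "is_ball Y' u' B'" "f y \<in> B'" "z' \<in> B'" for B'
    using yw cod.ball2_subset_is_ball[OF that]
    by (auto simp: attracting_pair_def pair_ball_def ball2_def)
  ultimately show ?thesis using that by blast
qed

lemma surjective:
  assumes "Y \<noteq> {}"
  shows "f ` Y = Y'"
proof
  show "f ` Y \<subseteq> Y'" using maps_into by blast
  obtain y where y: "y \<in> Y" using assms by blast
  show "Y' \<subseteq> f ` Y"
  proof
    fix z' assume "z' \<in> Y'"
    then obtain \<alpha> where "z' \<in> f ` closed_ball Y u \<alpha> y"
      using exists_closed_ball_reaching[OF y] by metis
    then show "z' \<in> f ` Y" by (auto simp: closed_ball_def)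
  qed
qed

lemma image_lift_ball:
  assumes y: "y \<in> Y" and B': "is_ball Y' u' B'" "f y \<in> B'"
  shows "f ` dom.lift_ball f y B' = B'"
proof
  show "f ` dom.lift_ball f y B' \<subseteq> B'" by (rule dom.image_lift_ball_subset)
  show "B' \<subseteq> f ` dom.lift_ball f y B'"
  proof
    fix z' assume "z' \<in> B'"
    then have "z' \<in> Y'" using cod.is_ball_subset[OF B'(1)] by blast
    then obtain \<alpha> where \<alpha>: "\<alpha> \<in> Gamma Y u" "z' \<in> f ` closed_ball Y u \<alpha> y"
        and sub: "\<And>B'. is_ball Y' u' B' \<Longrightarrow> f y \<in> B' \<Longrightarrow> z' \<in> B' \<Longrightarrow>
          f ` closed_ball Y u \<alpha> y \<subseteq> B'"
      using exists_closed_ball_reaching[OF y] by blast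
    show "z' \<in> f ` dom.lift_ball f y B'"
      using \<alpha> dom.closed_ball_subset_lift_ball[OF y \<alpha>(1) sub[OF B' \<open>z' \<in> B'\<close>]] by blast
  qed
qed

definition anchored :: "'b set set \<Rightarrow> 'b set \<times> 'a \<Rightarrow> bool" where
  "anchored N' p \<longleftrightarrow> fst p \<in> N' \<and> snd p \<in> Y \<and> f (snd p) \<in> fst p"

definition lifted_ball :: "'b set \<times> 'a \<Rightarrow> 'a set" where
  "lifted_ball p = dom.lift_ball f (snd p) (fst p)"

definition coherent_lifts :: "'b set \<times> 'a \<Rightarrow> 'b set \<times> 'a \<Rightarrow> bool" where
  "coherent_lifts p q \<longleftrightarrow> fst p \<subseteq> fst q \<longrightarrow> lifted_ball p \<subseteq> lifted_ball q"

lemma nest_of_lifted_balls: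
  assumes "nest_of_balls Y' u' N'" "\<forall>p\<in>M. anchored N' p" "\<forall>p\<in>M. \<forall>q\<in>M. coherent_lifts p q"
  shows "nest_of_balls Y u (lifted_ball ` M)"
  unfolding nest_of_balls_def
proof (intro conjI ballI)
  fix B assume "B \<in> lifted_ball ` M"
  then obtain p where "p \<in> M" "B = lifted_ball p" by blast
  then show "is_ball Y u B"
    using assms(2) dom.is_ball_lift_ball by (auto simp: anchored_def lifted_ball_def)
next
  fix A B assume "A \<in> lifted_ball ` M" "B \<in> lifted_ball ` M"
  then obtain p q where pq: "p \<in> M" "q \<in> M" "A = lifted_ball p" "B = lifted_ball q" by blast
  moreover have "fst p \<in> N'" "fst q \<in> N'" using assms(2) pq(1,2) by (auto simp: anchored_def)
  ultimately have "fst p \<subseteq> fst q \<or> fst q \<subseteq> fst p"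
    using assms(1) by (simp add: nest_of_balls_def)
  then show "A \<subseteq> B \<or> B \<subseteq> A" using assms(3) pq by (auto simp: coherent_lifts_def)
qed

text \<open>If a ball B' of the nest lay strictly inside all balls of a maximal coherent family, a
  preimage of a point of B' near the common point x would yield a coherent lift of B'.\<close>
lemma maximal_coherent_lifts_cofinal:
  assumes N': "nest_of_balls Y' u' N'"
    and M: "\<forall>p\<in>M. anchored N' p" "\<forall>p\<in>M. \<forall>q\<in>M. coherent_lifts p q"
      "\<And>p. anchored N' p \<Longrightarrow> \<forall>q\<in>M. coherent_lifts p q \<and> coherent_lifts q p \<Longrightarrow> p \<in> M"
    and x: "x \<in> Y" "x \<in> \<Inter>(lifted_ball ` M)" and B': "B' \<in> N'"
  shows "\<exists>q\<in>M. fst q \<subseteq> B'"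
proof (rule ccontr)
  assume none_inside: "\<not> ?thesis"
  have below: "B' \<subseteq> fst q \<and> \<not> fst q \<subseteq> B'" if "q \<in> M" for q
  proof -
    have "fst q \<in> N'" using M(1) that by (simp add: anchored_def)
    then have "fst q \<subseteq> B' \<or> B' \<subseteq> fst q" using N' B' by (simp add: nest_of_balls_def)
    then show ?thesis using none_inside that by blast
  qed
  have ball: "\<And>B. B \<in> N' \<Longrightarrow> is_ball Y' u' B" using N' by (simp add: nest_of_balls_def)
  obtain z' where z': "z' \<in> B'" using cod.is_ball_nonempty[OF ball[OF B']] by blast
  then have "z' \<in> Y'" using cod.is_ball_subset[OF ball[OF B']] by blast
  then obtain \<alpha> where \<alpha>: "\<alpha> \<in> Gamma Y u" "z' \<in> f ` closed_ball Y u \<alpha> x"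
      and sub: "\<And>B. is_ball Y' u' B \<Longrightarrow> f x \<in> B \<Longrightarrow> z' \<in> B \<Longrightarrow>
        f ` closed_ball Y u \<alpha> x \<subseteq> B"
    using exists_closed_ball_reaching[OF x(1)] by blast
  then obtain y1 where y1: "y1 \<in> closed_ball Y u \<alpha> x" "f y1 = z'" by blast
  have "coherent_lifts (B', y1) q" if q: "q \<in> M" for q
  proof -
    have qN: "fst q \<in> N'" and qY: "snd q \<in> Y" using M(1) q by (auto simp: anchored_def)
    have "x \<in> lifted_ball q" using x(2) q by (rule InterD[OF _ imageI])
    then have xq: "x \<in> dom.lift_ball f (snd q) (fst q)" by (simp add: lifted_ball_def)
    then have "f x \<in> fst q" using dom.image_lift_ball_subset[of f "snd q" "fst q"] by blast
    moreover have "z' \<in> fst q" using z' below[OF q] by blast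
    ultimately have "closed_ball Y u \<alpha> x \<subseteq> dom.lift_ball f x (fst q)"
      using dom.closed_ball_subset_lift_ball[OF x(1) \<alpha>(1) sub[OF ball[OF qN]]] by blast
    also have "\<dots> \<subseteq> lifted_ball q" using dom.lift_ball_mono[OF qY xq] by (simp add: lifted_ball_def)
    finally have "y1 \<in> dom.lift_ball f (snd q) (fst q)" using y1(1) by (auto simp: lifted_ball_def)
    then have "dom.lift_ball f y1 B' \<subseteq> dom.lift_ball f (snd q) (fst q)"
      using below[OF q] by (simp add: dom.lift_ball_mono[OF qY])
    then show ?thesis by (simp add: coherent_lifts_def lifted_ball_def)
  qed
  moreover have "coherent_lifts q (B', y1)" if "q \<in> M" for q
    using below that by (simp add: coherent_lifts_def)
  moreover have "anchored N' (B', y1)" using B' y1 z' by (auto simp: anchored_def closed_ball_def)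
  ultimately have "(B', y1) \<in> M" using M(3) by blast
  then show False using below[of "(B', y1)"] by simp
qed

lemma spherically_complete_codomain:
  assumes "Y \<noteq> {}"
  shows "spherically_complete Y' u'"
  unfolding spherically_complete_def
proof (intro allI impI)
  fix N' assume "N' \<noteq> {} \<and> nest_of_balls Y' u' N'"
  then have N': "N' \<noteq> {}" "nest_of_balls Y' u' N'" by auto
  obtain B0 where B0: "B0 \<in> N'" using N'(1) by blast
  then have "is_ball Y' u' B0" using N'(2) by (simp add: nest_of_balls_def)
  then obtain z0 where z0: "z0 \<in> B0" using cod.is_ball_nonempty by blast
  then have "z0 \<in> f ` Y"
    using cod.is_ball_subset[OF \<open>is_ball Y' u' B0\<close>] surjective[OF assms] by blast
  then obtain y0 where y0: "y0 \<in> Y" "f y0 \<in> B0" using z0 by blast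
  then have p0: "anchored N' (B0, y0)" using B0 by (simp add: anchored_def)
  have refl: "\<And>p. coherent_lifts p p" by (simp add: coherent_lifts_def)
  obtain M where M: "(B0, y0) \<in> M" "\<forall>p\<in>M. anchored N' p" "\<forall>p\<in>M. \<forall>q\<in>M. coherent_lifts p q"
      "\<And>p. anchored N' p \<Longrightarrow> \<forall>q\<in>M. coherent_lifts p q \<and> coherent_lifts q p \<Longrightarrow> p \<in> M"
    using exists_maximal_related_set[of "anchored N'" "(B0, y0)" coherent_lifts, OF p0 refl]
    by blast
  have "\<Inter>(lifted_ball ` M) \<noteq> {}"
    using spherically_complete nest_of_lifted_balls[OF N'(2) M(2,3)] M(1)
    unfolding spherically_complete_def by (metis empty_is_image equals0D)
  then obtain x where x: "x \<in> \<Inter>(lifted_ball ` M)" by blast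
  then have "x \<in> Y" using M(1) dom.lift_ball_subset unfolding lifted_ball_def by blast
  have "f x \<in> B'" if B': "B' \<in> N'" for B'
  proof -
    obtain q where "q \<in> M" "fst q \<subseteq> B'"
      using maximal_coherent_lifts_cofinal[OF N'(2) M(2-4) \<open>x \<in> Y\<close> x B'] by blast
    moreover have "x \<in> dom.lift_ball f (snd q) (fst q)"
      using x \<open>q \<in> M\<close> unfolding lifted_ball_def by blast
    ultimately show ?thesis using dom.image_lift_ball_subset[of f "snd q" "fst q"] by blast
  qed
  then show "\<Inter>N' \<noteq> {}" by blast
qed

end

theorem theorem2:
  fixes Y :: "'a set" and u :: "'a \<Rightarrow> 'a \<Rightarrow> 'g::{linorder,order_top}"
    and Y' :: "'b set" and u' :: "'b \<Rightarrow> 'b \<Rightarrow> 'h::{linorder,order_top}"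
    and f :: "'a \<Rightarrow> 'b"
  assumes "Y \<noteq> {}" and "Y' \<noteq> {}"
    and "ultrametric Y u" and "ultrametric Y' u'"
    and "immediate Y u Y' u' f"
    and "spherically_complete Y u"
  shows "f ` Y = Y' \<and> spherically_complete Y' u' \<and>
         (\<forall>y\<in>Y. \<forall>B'. is_ball Y' u' B' \<and> f y \<in> B' \<longrightarrow>
             (\<exists>B. is_ball Y u B \<and> y \<in> B \<and> f ` B = B'))"
proof -
  interpret immediate_map Y u Y' u' f
    using assms(3-6) by (simp add: immediate_map_def immediate_map_axioms_def ultrametric_space_def)
  have "\<exists>B. is_ball Y u B \<and> y \<in> B \<and> f ` B = B'"
    if "y \<in> Y" "is_ball Y' u' B'" "f y \<in> B'" for y B'
    using dom.is_ball_lift_ball[of y f B', OF that(1,3)]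
      dom.centre_in_lift_ball[of y f B', OF that(1,3)] image_lift_ball[OF that] by blast
  then show ?thesis
    using surjective[OF assms(1)] spherically_complete_codomain[OF assms(1)] by blast
qed

end
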